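(* Let $f:(0,1)\to(0,1)$ be of the form $f(p)=1-\sum_{k=1}^\infty c_k(1-p)^k$ with $c_k\ge0$, $\sum_k c_k=1$, and suppose $\lim_{p\to0}f(p)/p=\infty$ and $f'(p)=\Omega(f(p)/p)$ as $p\to0$. Then for every (possibly randomized) fast Bernoulli factory for $f$ on $(0,1)$ there exist $C,\delta>0$ such that $\mathbb E[N]\ge C f(p)/p$ for all $p<\delta$. Consequently, since Algorithm 1 (a fast factory for $f$ with $\mathbb E[N]=f(p)/p$) is available, Algorithm 1 is asymptotically optimal as $p\to0$ among all fast factories for $f$.
   Context: $\Omega$: for positive $f_1,f_2$, $f_1(x)=\Omega(f_2(x))$ as $x\to x_0$ means there are $C,\delta>0$ with $f_1(x)\ge Cf_2(x)$ for $|x-x_0|<\delta$. Let $X=(X_i)$ be i.i.d. Bernoulli($p$), $p\in(0,1)$, and $U=(U_i)$ i.i.d. uniform on $(0,1)$ independent of $X$. A (possibly randomized) Bernoulli factory for $f$ consists of measurable stopping functions $\tau_i(x_1,u_1;\dots;x_i,u_i)\in\{0,1\}$ and measurable output functions $\gamma_n$; $N=\min\{i:\tau_i=1\}$ is finite a.s. and $Y=\gamma_N(X_1,U_1;\dots;X_N,U_N)$ satisfies $\Pr[Y=1]=f(p)$. It is fast if for every $p$ there exist $A>0$, $\beta<1$ with $\Pr[N>n]\le A\beta^n$ for all $n$. Algorithm 1: with $d_k=c_k/(1-\sum_{j<k}c_j)$, for $i=1,2,\dots$ take $X_i$, set $V_i=1$ if $U_i<d_i$ else $0$; if $V_i=1$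 or $X_i=1$ output $Y=X_i$ and stop, else continue; $N$ is the final $i$. *)

theory Defs
  imports "HOL-Probability.Probability"
begin

text \<open>Sample points are sequences omega :: nat => bool * real; the pair omega (i-1) is
  (X_i, U_i) (0-based indexing of the underlying sequence).\<close>

definition step_measure :: "real \<Rightarrow> (bool \<times> real) measure" where
  "step_measure p = measure_pmf (bernoulli_pmf p) \<Otimes>\<^sub>M uniform_measure lborel {0<..<1}"

definition bf_space :: "real \<Rightarrow> (nat \<Rightarrow> bool \<times> real) measure" where
  "bf_space p = (\<Pi>\<^sub>M i\<in>UNIV. step_measure p)"

text \<open>The measurable space on which stopping and output functions are required to be
  measurable (same sigma-algebra as bf_space p for every p).\<close>
definition seq_space :: "(nat \<Rightarrow> bool \<times> real) measure" where
  "seq_space = (\<Pi>\<^sub>M i\<in>UNIV. (count_space UNIV \<Otimes>\<^sub>M (borel :: real measure)))"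

definition depends_on_prefix :: "nat \<Rightarrow> ((nat \<Rightarrow> bool \<times> real) \<Rightarrow> 'b) \<Rightarrow> bool" where
  "depends_on_prefix n g \<longleftrightarrow> (\<forall>\<omega> \<omega>'. (\<forall>i<n. \<omega> i = \<omega>' i) \<longrightarrow> g \<omega> = g \<omega>')"

definition stop_time :: "(nat \<Rightarrow> (nat \<Rightarrow> bool \<times> real) \<Rightarrow> bool) \<Rightarrow> (nat \<Rightarrow> bool \<times> real) \<Rightarrow> nat" where
  "stop_time \<tau> \<omega> = (LEAST n. 1 \<le> n \<and> \<tau> n \<omega>)"

definition bernoulli_factory ::
  "(real \<Rightarrow> real) \<Rightarrow> (nat \<Rightarrow> (nat \<Rightarrow> bool \<times> real) \<Rightarrow> bool)
     \<Rightarrow> (nat \<Rightarrow> (nat \<Rightarrow> bool \<times> real) \<Rightarrow> bool) \<Rightarrow> bool" where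
  "bernoulli_factory f \<tau> \<gamma> \<longleftrightarrow>
     (\<forall>n\<ge>1. \<tau> n \<in> measurable seq_space (count_space UNIV) \<and> depends_on_prefix n (\<tau> n)
            \<and> \<gamma> n \<in> measurable seq_space (count_space UNIV) \<and> depends_on_prefix n (\<gamma> n)) \<and>
     (\<forall>p\<in>{0<..<1}.
        (AE \<omega> in bf_space p. \<exists>n\<ge>1. \<tau> n \<omega>) \<and>
        measure (bf_space p) {\<omega> \<in> space (bf_space p). (\<exists>n\<ge>1. \<tau> n \<omega>) \<and> \<gamma> (stop_time \<tau> \<omega>) \<omega>} = f p)"

definition fast_factory ::
  "(real \<Rightarrow> real) \<Rightarrow> (nat \<Rightarrow> (nat \<Rightarrow> bool \<times> real) \<Rightarrow> bool)
     \<Rightarrow> (nat \<Rightarrow> (nat \<Rightarrow> bool \<times> real) \<Rightarrow> bool) \<Rightarrow> bool" where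
  "fast_factory f \<tau> \<gamma> \<longleftrightarrow> bernoulli_factory f \<tau> \<gamma> \<and>
     (\<forall>p\<in>{0<..<1}. \<exists>A>0. \<exists>\<beta><1. \<forall>n::nat.
        measure (bf_space p) {\<omega> \<in> space (bf_space p). \<not> (\<exists>k\<in>{1..n}. \<tau> k \<omega>)} \<le> A * \<beta> ^ n)"

definition expected_time :: "real \<Rightarrow> (nat \<Rightarrow> (nat \<Rightarrow> bool \<times> real) \<Rightarrow> bool) \<Rightarrow> ennreal" where
  "expected_time p \<tau> = (\<integral>\<^sup>+ \<omega>. ennreal (real (stop_time \<tau> \<omega>)) \<partial>bf_space p)"

end

theory Submission
  imports Defs
begin

(* Let N be the running time. An accepting run either sees a head X_(i+1) = 1 while N > i,
   or it sees only tails up to time N. Since the event N > i depends only on the first i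
   draws, the first kind of run has probability at most the sum over i of p Pr[N > i], which
   is p E[N]. Along an all-tails prefix the factory is driven by the uniforms alone, so
   accepting at time n in this way has probability (1 - p)^n a_n with a_n independent of p;
   this is at most f(q) for every q, and f(q) tends to 0 as q tends to 0, so a_n = 0.
   Hence f(p) <= p E[N] for every factory and every p. *)

section \<open>Infinite products of a probability space\<close>

lemma emeasure_PiM_finite_cylinder_map:
  fixes M :: "'a measure" and N :: "'b measure" and g :: "'i \<Rightarrow> 'a \<Rightarrow> 'b"
  assumes M: "prob_space M" and K: "finite K" and J: "finite J"
    and W: "\<And>j. j \<in> K \<Longrightarrow> W j \<in> sets M"
    and g: "\<And>j. g j \<in> M \<rightarrow>\<^sub>M N"
    and Y: "\<And>j. j \<in> J \<Longrightarrow> Y j \<in> sets N"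
    and indep: "\<And>j B. j \<in> K \<Longrightarrow> B \<in> sets N \<Longrightarrow>
      emeasure M (W j \<inter> g j -` B) = emeasure M (W j) * emeasure M (g j -` B \<inter> space M)"
  shows "emeasure (\<Pi>\<^sub>M j\<in>UNIV. M)
      {\<omega> \<in> space (\<Pi>\<^sub>M j\<in>UNIV. M). (\<forall>j\<in>K. \<omega> j \<in> W j) \<and> (\<forall>j\<in>J. g j (\<omega> j) \<in> Y j)}
    = (\<Prod>j\<in>K. emeasure M (W j)) * (\<Prod>j\<in>J. emeasure M (g j -` Y j \<inter> space M))"
proof -
  interpret M: prob_space M by (rule M)
  define W' where "W' j = (if j \<in> K then W j else space M)" for j
  define Y' where "Y' j = (if j \<in> J then Y j else space N)" for j
  define V where "V j = W' j \<inter> (g j -` Y' j \<inter> space M)" for j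
  have W'_space: "W' j \<subseteq> space M" for j
    using W sets.sets_into_space by (auto simp: W'_def)
  have g_space: "g j -` space N \<inter> space M = space M" for j
    using measurable_space[OF g] by auto
  have V: "V j \<in> sets M" for j
    unfolding V_def W'_def Y'_def using W Y by (intro sets.Int measurable_sets[OF g]) auto
  have factor: "emeasure M (V j) = emeasure M (W' j) * emeasure M (g j -` Y' j \<inter> space M)" for j
  proof (cases "j \<in> K")
    case True
    then have "V j = W j \<inter> g j -` Y' j"
      using W'_space[of j] by (auto simp: V_def W'_def)
    then show ?thesis
      using True Y by (simp add: W'_def Y'_def indep)
  qed (simp add: V_def W'_def M.emeasure_space_1 Int_absorb1)
  have "{\<omega> \<in> space (\<Pi>\<^sub>M j\<in>UNIV. M). (\<forall>j\<in>K. \<omega> j \<in> W j) \<and> (\<forall>j\<in>J. g j (\<omega> j) \<in> Y j)}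
      = prod_emb UNIV (\<lambda>_. M) (K \<union> J) (Pi\<^sub>E (K \<union> J) V)"
    using W'_space measurable_space[OF g]
    by (auto simp: prod_emb_iff space_PiM PiE_iff V_def W'_def Y'_def; metis UnCI)
  also have "emeasure (\<Pi>\<^sub>M j\<in>UNIV. M) \<dots> = (\<Prod>j\<in>K \<union> J. emeasure M (V j))"
    using K J V by (simp add: emeasure_PiM_emb M)
  also have "\<dots> = (\<Prod>j\<in>K \<union> J. emeasure M (W' j)) * (\<Prod>j\<in>K \<union> J. emeasure M (g j -` Y' j \<inter> space M))"
    by (simp add: factor prod.distrib)
  also have "(\<Prod>j\<in>K \<union> J. emeasure M (W' j)) = (\<Prod>j\<in>K. emeasure M (W j))"
    using K J M.emeasure_space_1 by (intro prod.mono_neutral_cong_right) (auto simp: W'_def)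
  also have "(\<Prod>j\<in>K \<union> J. emeasure M (g j -` Y' j \<inter> space M)) = (\<Prod>j\<in>J. emeasure M (g j -` Y j \<inter> space M))"
    using K J M.emeasure_space_1 by (intro prod.mono_neutral_cong_right) (auto simp: Y'_def g_space)
  finally show ?thesis .
qed

lemma emeasure_PiM_cylinder_map:
  fixes M :: "'a measure" and N :: "'b measure" and g :: "'i \<Rightarrow> 'a \<Rightarrow> 'b"
  assumes M: "prob_space M" and K: "finite K"
    and W: "\<And>j. j \<in> K \<Longrightarrow> W j \<in> sets M"
    and g: "\<And>j. g j \<in> M \<rightarrow>\<^sub>M N"
    and indep: "\<And>j B. j \<in> K \<Longrightarrow> B \<in> sets N \<Longrightarrow>
      emeasure M (W j \<inter> g j -` B) = emeasure M (W j) * emeasure M (g j -` B \<inter> space M)"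
    and D: "D \<in> sets (\<Pi>\<^sub>M j\<in>UNIV. N)"
  shows "emeasure (\<Pi>\<^sub>M j\<in>UNIV. M)
      {\<omega> \<in> space (\<Pi>\<^sub>M j\<in>UNIV. M). (\<forall>j\<in>K. \<omega> j \<in> W j) \<and> (\<lambda>j. g j (\<omega> j)) \<in> D}
    = (\<Prod>j\<in>K. emeasure M (W j)) * emeasure (\<Pi>\<^sub>M j\<in>UNIV. distr M N (g j)) D"
proof -
  interpret M: prob_space M by (rule M)
  define P where "P = (\<Pi>\<^sub>M j\<in>(UNIV :: 'i set). M)"
  define Q where "Q = (\<Pi>\<^sub>M j\<in>(UNIV :: 'i set). distr M N (g j))"
  define F where "F = {\<omega> \<in> space P. \<forall>j\<in>K. \<omega> j \<in> W j}"
  define G where "G \<omega> = (\<lambda>j. g j (\<omega> j))" for \<omega>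
  interpret P: prob_space P
    unfolding P_def by (intro prob_space_PiM M)
  have F_sets: "F \<in> sets P"
    unfolding F_def using K
  proof (intro sets.sets_Collect_finite_All)
    show "{\<omega> \<in> space P. \<omega> j \<in> W j} \<in> sets P" if "j \<in> K" for j
      unfolding P_def using W[OF that] by measurable
  qed
  have "(\<lambda>\<omega>. g j (\<omega> j)) \<in> P \<rightarrow>\<^sub>M N" for j
    unfolding P_def by (rule measurable_compose[OF _ g]) simp
  then have G_meas: "G \<in> P \<rightarrow>\<^sub>M Q"
    unfolding G_def Q_def
    by (intro measurable_PiM_single') (auto simp: P_def space_PiM intro: measurable_space[OF g])
  define A where "A = distr (density P (indicator F)) Q G"
  have emeasure_A: "emeasure A X = emeasure P (F \<inter> G -` X \<inter> space P)" if "X \<in> sets Q" for X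
    unfolding A_def using that G_meas F_sets
    by (simp add: emeasure_distr emeasure_restricted Int_ac)
  have "A = scale_measure (\<Prod>j\<in>K. emeasure M (W j)) Q"
  proof (rule measure_eqI_PiM_infinite[where I=UNIV and M="\<lambda>j. distr M N (g j)"])
    show "finite_measure A"
    proof (rule finite_measureI)
      have "emeasure A (space A) \<le> 1"
        using emeasure_A[of "space A"] P.emeasure_le_1 by (simp add: A_def)
      then show "emeasure A (space A) \<noteq> \<infinity>"
        by (auto simp: top_unique)
    qed
    fix Y J assume J: "finite J" and Y: "\<And>j. j \<in> J \<Longrightarrow> Y j \<in> sets (distr M N (g j))"
    define R where "R = prod_emb UNIV (\<lambda>j. distr M N (g j)) J (Pi\<^sub>E J Y)"
    have "R \<in> sets Q"
      unfolding R_def Q_def using J Y by (intro sets_PiM_I) auto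
    then have "emeasure A R = emeasure P {\<omega> \<in> space P. (\<forall>j\<in>K. \<omega> j \<in> W j) \<and> (\<forall>j\<in>J. g j (\<omega> j) \<in> Y j)}"
      using measurable_space[OF g]
      by (auto simp: emeasure_A F_def G_def R_def P_def prod_emb_iff space_PiM PiE_iff intro!: arg_cong[where f="emeasure _"])
    also have "\<dots> = (\<Prod>j\<in>K. emeasure M (W j)) * (\<Prod>j\<in>J. emeasure M (g j -` Y j \<inter> space M))"
      unfolding P_def using J Y g by (intro emeasure_PiM_finite_cylinder_map M K W indep) auto
    also have "(\<Prod>j\<in>J. emeasure M (g j -` Y j \<inter> space M)) = emeasure Q R"
      unfolding Q_def R_def using J Y g
      by (simp add: emeasure_PiM_emb M.prob_space_distr[OF g] emeasure_distr[OF g])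
    finally show "emeasure A R = emeasure (scale_measure (\<Prod>j\<in>K. emeasure M (W j)) Q) R"
      by simp
  qed (simp_all add: A_def Q_def)
  then have "emeasure P (F \<inter> G -` D \<inter> space P) = (\<Prod>j\<in>K. emeasure M (W j)) * emeasure Q D"
    using emeasure_A[of D] D by (simp add: Q_def)
  moreover have "F \<inter> G -` D \<inter> space P = {\<omega> \<in> space P. (\<forall>j\<in>K. \<omega> j \<in> W j) \<and> (\<lambda>j. g j (\<omega> j)) \<in> D}"
    by (auto simp: F_def G_def)
  ultimately show ?thesis
    by (simp add: P_def Q_def)
qed

lemma emeasure_PiM_prefix_indep:
  fixes M :: "'a measure" and R :: "(nat \<Rightarrow> 'a) set"
  assumes M: "prob_space M" and W: "W \<in> sets M" and R: "R \<in> sets (\<Pi>\<^sub>M j\<in>UNIV. M)"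
    and prefix: "\<And>\<omega> \<omega>'. (\<And>j. j < i \<Longrightarrow> \<omega> j = \<omega>' j) \<Longrightarrow> \<omega> \<in> R \<longleftrightarrow> \<omega>' \<in> R"
  shows "emeasure (\<Pi>\<^sub>M j\<in>UNIV. M) {\<omega> \<in> R. \<omega> i \<in> W} = emeasure M W * emeasure (\<Pi>\<^sub>M j\<in>UNIV. M) R"
proof -
  interpret M: prob_space M by (rule M)
  obtain x where x: "x \<in> space M"
    using M.not_empty by blast
  \<comment> \<open>Resetting coordinate \<open>i\<close> to a constant leaves membership in \<open>R\<close> unchanged and makes
    that coordinate independent of \<open>W\<close>.\<close>
  define g where "g j = (if j = i then (\<lambda>_. x) else id)" for j
  have g: "g j \<in> M \<rightarrow>\<^sub>M M" for j
    using x by (simp add: g_def)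
  have reset: "(\<lambda>j. g j (\<omega> j)) \<in> R \<longleftrightarrow> \<omega> \<in> R" for \<omega>
    by (rule prefix) (simp add: g_def)
  have cylinder: "emeasure (\<Pi>\<^sub>M j\<in>UNIV. M) {\<omega> \<in> space (\<Pi>\<^sub>M j\<in>UNIV. M). (\<forall>j\<in>K. \<omega> j \<in> V) \<and> \<omega> \<in> R}
      = (\<Prod>j\<in>K. emeasure M V) * emeasure (\<Pi>\<^sub>M j\<in>UNIV. distr M M (g j)) R"
    if K: "K \<subseteq> {i}" and V: "V \<in> sets M" for K V
  proof -
    have "emeasure M (V \<inter> g j -` B) = emeasure M V * emeasure M (g j -` B \<inter> space M)"
      if "j \<in> K" for j B
      using that K sets.sets_into_space[OF V] M.emeasure_space_1 by (auto simp: g_def Int_absorb2)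
    with K V have "emeasure (\<Pi>\<^sub>M j\<in>UNIV. M)
        {\<omega> \<in> space (\<Pi>\<^sub>M j\<in>UNIV. M). (\<forall>j\<in>K. \<omega> j \<in> V) \<and> (\<lambda>j. g j (\<omega> j)) \<in> R}
      = (\<Prod>j\<in>K. emeasure M V) * emeasure (\<Pi>\<^sub>M j\<in>UNIV. distr M M (g j)) R"
      by (intro emeasure_PiM_cylinder_map M g R) (auto intro: finite_subset)
    then show ?thesis
      by (simp add: reset)
  qed
  have R_space: "R \<subseteq> space (\<Pi>\<^sub>M j\<in>UNIV. M)"
    using R by (rule sets.sets_into_space)
  have "{\<omega> \<in> space (\<Pi>\<^sub>M j\<in>UNIV. M). (\<forall>j\<in>{i}. \<omega> j \<in> W) \<and> \<omega> \<in> R} = {\<omega> \<in> R. \<omega> i \<in> W}"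
       "{\<omega> \<in> space (\<Pi>\<^sub>M j\<in>UNIV. M). (\<forall>j\<in>{}. \<omega> j \<in> space M) \<and> \<omega> \<in> R} = R"
    using R_space by auto
  with cylinder[of "{i}" W] cylinder[of "{}" "space M"] W show ?thesis
    by simp
qed

section \<open>Power series at the endpoint 1\<close>

lemma tendsto_power_series_at_left_1:
  fixes a :: "nat \<Rightarrow> real"
  assumes "summable (\<lambda>k. \<bar>a k\<bar>)"
  shows "((\<lambda>x. \<Sum>k. a k * x ^ k) \<longlongrightarrow> (\<Sum>k. a k)) (at_left 1)"
proof -
  have "continuous_on {0..1} (\<lambda>x. \<Sum>k. a k * x ^ k)"
  proof (rule uniform_limit_theorem)
    show "uniform_limit {0..1} (\<lambda>n x. \<Sum>k<n. a k * x ^ k) (\<lambda>x. \<Sum>k. a k * x ^ k) sequentially"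
      using assms by (intro Weierstrass_m_test) (auto simp: abs_mult power_le_one mult_left_le)
  qed (auto intro!: always_eventually continuous_intros)
  then have "((\<lambda>x. \<Sum>k. a k * x ^ k) \<longlongrightarrow> (\<Sum>k. a k * 1 ^ k)) (at 1 within {0..1})"
    by (rule continuous_on_def[THEN iffD1, rule_format]) simp
  then show ?thesis
    by (simp add: at_within_Icc_at_left)
qed

lemma tendsto_one_minus_power_series_at_right_0:
  fixes f :: "real \<Rightarrow> real" and c :: "nat \<Rightarrow> real"
  assumes c_nonneg: "\<forall>k. c k \<ge> 0"
    and c_sum: "(\<lambda>k. c (Suc k)) sums 1"
    and f_form: "\<forall>p\<in>{0<..<1}. f p = 1 - (\<Sum>k. c (Suc k) * (1 - p) ^ Suc k)"
  shows "(f \<longlongrightarrow> 0) (at_right 0)"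
proof -
  define g where "g x = x * (\<Sum>k. c (Suc k) * x ^ k)" for x :: real
  have "summable (\<lambda>k. \<bar>c (Suc k)\<bar>)"
    using c_nonneg sums_summable[OF c_sum] by simp
  then have "(g \<longlongrightarrow> 1 * (\<Sum>k. c (Suc k))) (at_left 1)"
    unfolding g_def by (intro tendsto_mult tendsto_ident_at tendsto_power_series_at_left_1)
  then have g_lim: "(g \<longlongrightarrow> 1) (at_left 1)"
    using sums_unique[OF c_sum] by simp
  have "filterlim (\<lambda>p. 1 - p) (at_left 1) (at_right (0::real))"
    unfolding filterlim_at
  proof
    show "\<forall>\<^sub>F p in at_right 0. 1 - p \<in> {..<1} \<and> 1 - p \<noteq> (1::real)"
      using eventually_at_right_less[of "0::real"] by (rule eventually_mono) simp
    have "((\<lambda>p. 1 - p) \<longlongrightarrow> 1 - 0) (at_right (0::real))"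
      by (intro tendsto_intros)
    then show "((\<lambda>p. 1 - p) \<longlongrightarrow> 1) (at_right (0::real))"
      by simp
  qed
  with g_lim have "((\<lambda>p. g (1 - p)) \<longlongrightarrow> 1) (at_right 0)"
    by (rule filterlim_compose)
  then have "((\<lambda>p. 1 - g (1 - p)) \<longlongrightarrow> 1 - 1) (at_right 0)"
    by (intro tendsto_diff tendsto_const)
  moreover have "\<forall>\<^sub>F p in at_right 0. 1 - g (1 - p) = f p"
  proof (rule eventually_mono[OF eventually_at_right_real[OF zero_less_one]])
    fix p :: real assume p: "p \<in> {0<..<1}"
    have "norm (c (Suc k) * (1 - p) ^ k) \<le> c (Suc k)" for k
    proof -
      have "0 \<le> c (Suc k)" "0 \<le> (1 - p) ^ k" "(1 - p) ^ k \<le> 1"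
        using c_nonneg p by (auto intro: power_le_one)
      then show ?thesis
        by (simp add: abs_mult mult_left_le)
    qed
    then have "summable (\<lambda>k. c (Suc k) * (1 - p) ^ k)"
      by (intro summable_comparison_test'[OF sums_summable[OF c_sum]])
    then have "(\<Sum>k. c (Suc k) * (1 - p) ^ Suc k) = (1 - p) * (\<Sum>k. c (Suc k) * (1 - p) ^ k)"
      using suminf_mult[of "\<lambda>k. c (Suc k) * (1 - p) ^ k" "1 - p"] by (simp add: mult.left_commute)
    then show "1 - g (1 - p) = f p"
      using f_form p by (simp add: g_def)
  qed
  ultimately show ?thesis
    using tendsto_cong[of "\<lambda>p. 1 - g (1 - p)" f "at_right 0" 0] by simp
qed

section \<open>The sample space of a Bernoulli factory\<close>

abbreviation draw_space :: "(bool \<times> real) measure" where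
  "draw_space \<equiv> count_space UNIV \<Otimes>\<^sub>M borel"

lemma prob_space_uniform_unit_interval: "prob_space (uniform_measure lborel {0<..<1::real})"
  by (intro prob_space_uniform_measure) auto

lemma sets_step_measure [measurable_cong]: "sets (step_measure p) = sets draw_space"
  unfolding step_measure_def by (intro sets_pair_measure_cong) auto

lemma space_step_measure [simp]: "space (step_measure p) = UNIV"
  using sets_eq_imp_space_eq[OF sets_step_measure[of p]] by (simp add: space_pair_measure)

lemma prob_space_step_measure: "prob_space (step_measure p)"
  unfolding step_measure_def
  by (intro prob_space_pair prob_space_measure_pmf prob_space_uniform_unit_interval)

lemma sets_bf_space [measurable_cong]: "sets (bf_space p) = sets seq_space"
  unfolding bf_space_def seq_space_def by (intro sets_PiM_cong) (auto simp: sets_step_measure)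

lemma space_bf_space [simp]: "space (bf_space p) = UNIV"
  unfolding bf_space_def by (simp add: space_PiM)

lemma space_seq_space [simp]: "space seq_space = UNIV"
  unfolding seq_space_def by (simp add: space_PiM space_pair_measure)

lemma sets_seq_space_coins:
  shows "{\<omega>. \<forall>j<n. \<not> fst (\<omega> j)} \<in> sets seq_space" and "{\<omega>. fst (\<omega> i)} \<in> sets seq_space"
proof -
  have "{\<omega> \<in> space seq_space. \<forall>j<n. \<not> fst (\<omega> j)} \<in> sets seq_space"
    "{\<omega> \<in> space seq_space. fst (\<omega> i)} \<in> sets seq_space"
    unfolding seq_space_def by measurable
  then show "{\<omega>. \<forall>j<n. \<not> fst (\<omega> j)} \<in> sets seq_space" "{\<omega>. fst (\<omega> i)} \<in> sets seq_space"
    by simp_all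
qed

lemma prob_space_bf_space: "prob_space (bf_space p)"
  unfolding bf_space_def by (intro prob_space_PiM prob_space_step_measure)

lemma emeasure_step_measure_Times:
  assumes "B \<in> sets borel"
  shows "emeasure (step_measure p) (A \<times> B) =
    emeasure (measure_pmf (bernoulli_pmf p)) A * emeasure (uniform_measure lborel {0<..<1}) B"
  unfolding step_measure_def using assms
  by (intro sigma_finite_measure.emeasure_pair_measure_Times prob_space_imp_sigma_finite
      prob_space_uniform_unit_interval) auto

lemma emeasure_bernoulli_pmf [simp]:
  assumes "0 \<le> p" "p \<le> 1"
  shows "emeasure (measure_pmf (bernoulli_pmf p)) {True} = ennreal p"
    and "emeasure (measure_pmf (bernoulli_pmf p)) {False} = ennreal (1 - p)"
    and "emeasure (measure_pmf (bernoulli_pmf p)) UNIV = 1"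
  using assms measure_pmf.emeasure_space_1[of "bernoulli_pmf p"] by (simp_all add: emeasure_pmf_single)

lemma emeasure_bf_space_heads_indep:
  assumes p: "0 \<le> p" "p \<le> 1" and R: "R \<in> sets seq_space"
    and prefix: "depends_on_prefix i (\<lambda>\<omega>. \<omega> \<in> R)"
  shows "emeasure (bf_space p) {\<omega> \<in> R. fst (\<omega> i)} = ennreal p * emeasure (bf_space p) R"
proof -
  have "emeasure (bf_space p) {\<omega> \<in> R. \<omega> i \<in> {True} \<times> UNIV}
      = emeasure (step_measure p) ({True} \<times> UNIV) * emeasure (bf_space p) R"
    unfolding bf_space_def using R prefix
    by (intro emeasure_PiM_prefix_indep prob_space_step_measure)
       (auto simp: sets_bf_space[unfolded bf_space_def] depends_on_prefix_def)
  then show ?thesis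
    using p by (simp add: emeasure_step_measure_Times mem_Times_iff)
qed

definition tails_draw :: "(bool \<times> real) measure" where
  "tails_draw = distr (uniform_measure lborel {0<..<1}) draw_space (Pair False)"

lemma distr_step_measure_tails:
  assumes "0 \<le> p" "p \<le> 1"
  shows "distr (step_measure p) draw_space (\<lambda>s. (False, snd s)) = tails_draw"
proof (rule measure_eqI)
  fix B assume "B \<in> sets (distr (step_measure p) draw_space (\<lambda>s. (False, snd s)))"
  then have B: "B \<in> sets draw_space" by simp
  have Pair_B: "Pair False -` B \<in> sets borel"
    using B by (rule sets_Pair1)
  have "emeasure (distr (step_measure p) draw_space (\<lambda>s. (False, snd s))) B
      = emeasure (step_measure p) (UNIV \<times> Pair False -` B)"
    using B by (subst emeasure_distr) (auto intro!: arg_cong[where f="emeasure _"])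
  also have "\<dots> = emeasure tails_draw B"
    unfolding tails_draw_def using B assms Pair_B
    by (simp add: emeasure_step_measure_Times emeasure_distr vimage_def)
  finally show "emeasure (distr (step_measure p) draw_space (\<lambda>s. (False, snd s))) B = emeasure tails_draw B" .
qed (simp add: tails_draw_def)

lemma emeasure_bf_space_tails_prefix:
  assumes p: "0 \<le> p" "p \<le> 1" and A: "A \<in> sets seq_space"
    and prefix: "depends_on_prefix n (\<lambda>\<omega>. \<omega> \<in> A)"
  shows "emeasure (bf_space p) {\<omega> \<in> A. \<forall>j<n. \<not> fst (\<omega> j)}
    = ennreal ((1 - p) ^ n) * emeasure (\<Pi>\<^sub>M j\<in>UNIV. tails_draw) A"
proof -
  define g where "g j s = (False, snd s)" for j :: nat and s :: "bool \<times> real"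
  have g: "g j \<in> step_measure p \<rightarrow>\<^sub>M draw_space" for j
    unfolding g_def by measurable
  have indep: "emeasure (step_measure p) ({False} \<times> UNIV \<inter> g j -` B)
      = emeasure (step_measure p) ({False} \<times> UNIV) * emeasure (step_measure p) (g j -` B \<inter> space (step_measure p))"
    if B: "B \<in> sets draw_space" for j B
  proof -
    have "Pair False -` B \<in> sets borel"
      using B by (rule sets_Pair1)
    moreover have "{False} \<times> UNIV \<inter> g j -` B = {False} \<times> Pair False -` B" "g j -` B = UNIV \<times> Pair False -` B"
      by (auto simp: g_def)
    ultimately show ?thesis
      using p by (simp add: emeasure_step_measure_Times)
  qed
  have "{\<omega> \<in> space (bf_space p). (\<forall>j\<in>{..<n}. \<omega> j \<in> {False} \<times> UNIV) \<and> (\<lambda>j. g j (\<omega> j)) \<in> A}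
      = {\<omega> \<in> A. \<forall>j<n. \<not> fst (\<omega> j)}"
  proof -
    have "(\<lambda>j. g j (\<omega> j)) \<in> A \<longleftrightarrow> \<omega> \<in> A" if "\<forall>j<n. \<not> fst (\<omega> j)" for \<omega>
      using prefix that unfolding depends_on_prefix_def g_def
      by (metis (mono_tags, lifting) prod.collapse)
    then show ?thesis
      by (auto simp: mem_Times_iff)
  qed
  moreover have "emeasure (bf_space p)
      {\<omega> \<in> space (bf_space p). (\<forall>j\<in>{..<n}. \<omega> j \<in> {False} \<times> UNIV) \<and> (\<lambda>j. g j (\<omega> j)) \<in> A}
    = (\<Prod>j\<in>{..<n}. emeasure (step_measure p) ({False} \<times> UNIV))
      * emeasure (\<Pi>\<^sub>M j\<in>UNIV. distr (step_measure p) draw_space (g j)) A"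
    unfolding bf_space_def using A g indep
    by (intro emeasure_PiM_cylinder_map prob_space_step_measure) (auto simp: seq_space_def)
  moreover have "distr (step_measure p) draw_space (g j) = tails_draw" for j
    unfolding g_def using distr_step_measure_tails[OF p] .
  ultimately show ?thesis
    using p by (simp add: emeasure_step_measure_Times ennreal_power)
qed

section \<open>Runs of a Bernoulli factory\<close>

definition running ::
    "(nat \<Rightarrow> (nat \<Rightarrow> bool \<times> real) \<Rightarrow> bool) \<Rightarrow> nat \<Rightarrow> (nat \<Rightarrow> bool \<times> real) set" where
  "running \<tau> i = {\<omega>. \<forall>k\<in>{1..i}. \<not> \<tau> k \<omega>}"

(* meaningful only for n >= 1, since the factory never stops at time 0 *)
definition accepts_at ::
    "(nat \<Rightarrow> (nat \<Rightarrow> bool \<times> real) \<Rightarrow> bool) \<Rightarrow> (nat \<Rightarrow> (nat \<Rightarrow> bool \<times> real) \<Rightarrow> bool)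
      \<Rightarrow> nat \<Rightarrow> (nat \<Rightarrow> bool \<times> real) set" where
  "accepts_at \<tau> \<gamma> n = {\<omega> \<in> running \<tau> (n - 1). \<tau> n \<omega> \<and> \<gamma> n \<omega>}"

definition accepting ::
    "(nat \<Rightarrow> (nat \<Rightarrow> bool \<times> real) \<Rightarrow> bool) \<Rightarrow> (nat \<Rightarrow> (nat \<Rightarrow> bool \<times> real) \<Rightarrow> bool)
      \<Rightarrow> (nat \<Rightarrow> bool \<times> real) set" where
  "accepting \<tau> \<gamma> = {\<omega>. (\<exists>n\<ge>1. \<tau> n \<omega>) \<and> \<gamma> (stop_time \<tau> \<omega>) \<omega>}"

lemma stop_time_eqI:
  assumes "1 \<le> n" "\<tau> n \<omega>" "\<omega> \<in> running \<tau> (n - 1)"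
  shows "stop_time \<tau> \<omega> = n"
  unfolding stop_time_def
proof (rule Least_equality)
  fix m assume "1 \<le> m \<and> \<tau> m \<omega>"
  then show "n \<le> m"
    using assms(3) by (force simp: running_def)
qed (use assms in simp)

lemma stop_time_stops:
  assumes "\<exists>n\<ge>1. \<tau> n \<omega>"
  shows "1 \<le> stop_time \<tau> \<omega>" "\<tau> (stop_time \<tau> \<omega>) \<omega>"
    and running_iff_less_stop_time: "\<omega> \<in> running \<tau> i \<longleftrightarrow> i < stop_time \<tau> \<omega>"
proof -
  have least: "1 \<le> stop_time \<tau> \<omega> \<and> \<tau> (stop_time \<tau> \<omega>) \<omega>"
    using assms unfolding stop_time_def by (metis (mono_tags, lifting) LeastI)
  then show "1 \<le> stop_time \<tau> \<omega>" "\<tau> (stop_time \<tau> \<omega>) \<omega>"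
    by simp_all
  have "\<not> \<tau> k \<omega>" if "1 \<le> k" "k < stop_time \<tau> \<omega>" for k
    using not_less_Least[of k "\<lambda>n. 1 \<le> n \<and> \<tau> n \<omega>"] that by (simp add: stop_time_def)
  with least show "\<omega> \<in> running \<tau> i \<longleftrightarrow> i < stop_time \<tau> \<omega>"
    by (auto simp: running_def not_less)
qed

lemma accepting_eq_UN_accepts_at: "accepting \<tau> \<gamma> = (\<Union>n. accepts_at \<tau> \<gamma> (Suc n))"
proof (intro set_eqI iffI)
  fix \<omega> assume \<omega>: "\<omega> \<in> accepting \<tau> \<gamma>"
  then have stops: "\<exists>n\<ge>1. \<tau> n \<omega>"
    by (simp add: accepting_def)
  have "\<omega> \<in> accepts_at \<tau> \<gamma> (stop_time \<tau> \<omega>)"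
    using \<omega> stop_time_stops[of \<tau> \<omega>, OF stops] by (simp add: accepting_def accepts_at_def)
  moreover have "stop_time \<tau> \<omega> = Suc (stop_time \<tau> \<omega> - 1)"
    using stop_time_stops(1)[of \<tau> \<omega>, OF stops] by simp
  ultimately show "\<omega> \<in> (\<Union>n. accepts_at \<tau> \<gamma> (Suc n))"
    by (metis UN_I UNIV_I)
next
  fix \<omega> assume "\<omega> \<in> (\<Union>n. accepts_at \<tau> \<gamma> (Suc n))"
  then obtain n where "\<omega> \<in> accepts_at \<tau> \<gamma> (Suc n)"
    by blast
  moreover from this have "stop_time \<tau> \<omega> = Suc n"
    by (intro stop_time_eqI) (auto simp: accepts_at_def)
  ultimately show "\<omega> \<in> accepting \<tau> \<gamma>"
    by (auto simp: accepts_at_def accepting_def)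
qed

lemma accepting_subset:
  "accepting \<tau> \<gamma> \<subseteq>
    (\<Union>n. {\<omega> \<in> accepts_at \<tau> \<gamma> (Suc n). \<forall>j<Suc n. \<not> fst (\<omega> j)}) \<union> (\<Union>i. {\<omega> \<in> running \<tau> i. fst (\<omega> i)})"
proof
  fix \<omega> assume \<omega>: "\<omega> \<in> accepting \<tau> \<gamma>"
  then have stops: "\<exists>n\<ge>1. \<tau> n \<omega>"
    by (simp add: accepting_def)
  show "\<omega> \<in> (\<Union>n. {\<omega> \<in> accepts_at \<tau> \<gamma> (Suc n). \<forall>j<Suc n. \<not> fst (\<omega> j)}) \<union> (\<Union>i. {\<omega> \<in> running \<tau> i. fst (\<omega> i)})"
  proof (cases "\<exists>j<stop_time \<tau> \<omega>. fst (\<omega> j)")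
    case True
    then obtain j where "j < stop_time \<tau> \<omega>" "fst (\<omega> j)"
      by blast
    then have "\<omega> \<in> {\<omega> \<in> running \<tau> j. fst (\<omega> j)}"
      using running_iff_less_stop_time[of \<tau> \<omega>, OF stops] by simp
    then show ?thesis
      by blast
  next
    case False
    define n where "n = stop_time \<tau> \<omega> - 1"
    have "Suc n = stop_time \<tau> \<omega>"
      using stop_time_stops(1)[of \<tau> \<omega>, OF stops] by (simp add: n_def)
    then have "\<omega> \<in> {\<omega> \<in> accepts_at \<tau> \<gamma> (Suc n). \<forall>j<Suc n. \<not> fst (\<omega> j)}"
      using False \<omega> stop_time_stops[of \<tau> \<omega>, OF stops] by (simp add: accepting_def accepts_at_def)
    then show ?thesis
      by blast
  qed
qed

lemma running_sets:
  assumes "\<And>n. 1 \<le> n \<Longrightarrow> \<tau> n \<in> seq_space \<rightarrow>\<^sub>M count_space UNIV"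
  shows "running \<tau> i \<in> sets seq_space"
proof -
  have "{\<omega> \<in> space seq_space. \<forall>k\<in>{1..i}. \<not> \<tau> k \<omega>} \<in> sets seq_space"
  proof (intro sets.sets_Collect_finite_All)
    fix k assume "k \<in> {1..i}"
    then have [measurable]: "\<tau> k \<in> seq_space \<rightarrow>\<^sub>M count_space UNIV"
      using assms by simp
    show "{\<omega> \<in> space seq_space. \<not> \<tau> k \<omega>} \<in> sets seq_space"
      by measurable
  qed simp
  then show ?thesis
    by (simp add: running_def)
qed

lemma accepts_at_sets:
  assumes "\<And>n. 1 \<le> n \<Longrightarrow> \<tau> n \<in> seq_space \<rightarrow>\<^sub>M count_space UNIV"
    and "\<And>n. 1 \<le> n \<Longrightarrow> \<gamma> n \<in> seq_space \<rightarrow>\<^sub>M count_space UNIV"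
    and "1 \<le> n"
  shows "accepts_at \<tau> \<gamma> n \<in> sets seq_space"
proof -
  have [measurable]: "\<tau> n \<in> seq_space \<rightarrow>\<^sub>M count_space UNIV" "\<gamma> n \<in> seq_space \<rightarrow>\<^sub>M count_space UNIV"
    using assms by simp_all
  have [measurable]: "running \<tau> (n - 1) \<in> sets seq_space"
    using assms(1) by (rule running_sets)
  have "{\<omega> \<in> space seq_space. \<omega> \<in> running \<tau> (n - 1) \<and> \<tau> n \<omega> \<and> \<gamma> n \<omega>} \<in> sets seq_space"
    by measurable
  then show ?thesis
    by (simp add: accepts_at_def)
qed

lemma accepting_sets:
  assumes "\<And>n. 1 \<le> n \<Longrightarrow> \<tau> n \<in> seq_space \<rightarrow>\<^sub>M count_space UNIV"
    and "\<And>n. 1 \<le> n \<Longrightarrow> \<gamma> n \<in> seq_space \<rightarrow>\<^sub>M count_space UNIV"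
  shows "accepting \<tau> \<gamma> \<in> sets seq_space"
proof -
  have "accepts_at \<tau> \<gamma> (Suc n) \<in> sets seq_space" for n
    using accepts_at_sets[OF assms, where n="Suc n"] by simp
  then show ?thesis
    unfolding accepting_eq_UN_accepts_at by (intro sets.countable_nat_UN) blast
qed

lemma depends_on_prefix_mono:
  "m \<le> n \<Longrightarrow> depends_on_prefix m g \<Longrightarrow> depends_on_prefix n g"
  unfolding depends_on_prefix_def by auto

lemma depends_on_prefix_running:
  assumes "\<And>n. 1 \<le> n \<Longrightarrow> depends_on_prefix n (\<tau> n)"
  shows "depends_on_prefix i (\<lambda>\<omega>. \<omega> \<in> running \<tau> i)"
  unfolding depends_on_prefix_def running_def
proof (intro allI impI)
  fix \<omega> \<omega>' :: "nat \<Rightarrow> bool \<times> real" assume "\<forall>j<i. \<omega> j = \<omega>' j"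
  then have "\<tau> k \<omega> = \<tau> k \<omega>'" if "k \<in> {1..i}" for k
    using depends_on_prefix_mono[of k i "\<tau> k"] assms[of k] that unfolding depends_on_prefix_def by auto
  then show "\<omega> \<in> {\<omega>. \<forall>k\<in>{1..i}. \<not> \<tau> k \<omega>} \<longleftrightarrow> \<omega>' \<in> {\<omega>. \<forall>k\<in>{1..i}. \<not> \<tau> k \<omega>}"
    by auto
qed

lemma depends_on_prefix_accepts_at:
  assumes "\<And>n. 1 \<le> n \<Longrightarrow> depends_on_prefix n (\<tau> n)"
    and "\<And>n. 1 \<le> n \<Longrightarrow> depends_on_prefix n (\<gamma> n)"
    and "1 \<le> n"
  shows "depends_on_prefix n (\<lambda>\<omega>. \<omega> \<in> accepts_at \<tau> \<gamma> n)"
  unfolding depends_on_prefix_def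
proof (intro allI impI)
  fix \<omega> \<omega>' :: "nat \<Rightarrow> bool \<times> real" assume agree: "\<forall>j<n. \<omega> j = \<omega>' j"
  have "depends_on_prefix n (\<lambda>\<omega>. \<omega> \<in> running \<tau> (n - 1))"
    by (rule depends_on_prefix_mono[OF _ depends_on_prefix_running[OF assms(1)]]) simp
  with agree have "\<omega> \<in> running \<tau> (n - 1) \<longleftrightarrow> \<omega>' \<in> running \<tau> (n - 1)"
    unfolding depends_on_prefix_def by blast
  moreover have "\<tau> n \<omega> = \<tau> n \<omega>'" "\<gamma> n \<omega> = \<gamma> n \<omega>'"
    using assms agree unfolding depends_on_prefix_def by blast+
  ultimately show "(\<omega> \<in> accepts_at \<tau> \<gamma> n) = (\<omega>' \<in> accepts_at \<tau> \<gamma> n)"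
    by (simp add: accepts_at_def)
qed

lemma expected_time_eq_suminf_running:
  assumes stops: "AE \<omega> in bf_space p. \<exists>n\<ge>1. \<tau> n \<omega>"
    and running: "\<And>i. running \<tau> i \<in> sets seq_space"
  shows "expected_time p \<tau> = (\<Sum>i. emeasure (bf_space p) (running \<tau> i))"
proof -
  have "AE \<omega> in bf_space p. ennreal (real (stop_time \<tau> \<omega>)) = (\<Sum>i. indicator (running \<tau> i) \<omega>)"
    using stops
  proof eventually_elim
    case (elim \<omega>)
    have "(\<Sum>i. indicator (running \<tau> i) \<omega>) = (\<Sum>i<stop_time \<tau> \<omega>. 1 :: ennreal)"
      using running_iff_less_stop_time[of \<tau> \<omega>, OF elim]
      by (subst suminf_finite[of "{..<stop_time \<tau> \<omega>}"]) (auto simp: indicator_def)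
    then show ?case
      by (simp add: ennreal_of_nat_eq_real_of_nat)
  qed
  then have "expected_time p \<tau> = (\<integral>\<^sup>+ \<omega>. (\<Sum>i. indicator (running \<tau> i) \<omega>) \<partial>bf_space p)"
    unfolding expected_time_def by (rule nn_integral_cong_AE)
  also have "\<dots> = (\<Sum>i. emeasure (bf_space p) (running \<tau> i))"
    using running by (simp add: nn_integral_suminf sets_bf_space)
  finally show ?thesis .
qed

lemma bernoulli_factoryD:
  assumes "bernoulli_factory f \<tau> \<gamma>"
  shows "\<And>n. 1 \<le> n \<Longrightarrow> \<tau> n \<in> seq_space \<rightarrow>\<^sub>M count_space UNIV"
    and "\<And>n. 1 \<le> n \<Longrightarrow> depends_on_prefix n (\<tau> n)"
    and "\<And>n. 1 \<le> n \<Longrightarrow> \<gamma> n \<in> seq_space \<rightarrow>\<^sub>M count_space UNIV"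
    and "\<And>n. 1 \<le> n \<Longrightarrow> depends_on_prefix n (\<gamma> n)"
    and "\<And>p. p \<in> {0<..<1} \<Longrightarrow> AE \<omega> in bf_space p. \<exists>n\<ge>1. \<tau> n \<omega>"
  using assms unfolding bernoulli_factory_def by auto

lemma emeasure_accepting:
  assumes "bernoulli_factory f \<tau> \<gamma>" "q \<in> {0<..<1}"
  shows "emeasure (bf_space q) (accepting \<tau> \<gamma>) = ennreal (f q)"
proof -
  interpret prob_space "bf_space q"
    by (rule prob_space_bf_space)
  show ?thesis
    using assms by (simp add: bernoulli_factory_def accepting_def emeasure_eq_measure)
qed

lemma bernoulli_factory_nonneg:
  assumes "bernoulli_factory f \<tau> \<gamma>" "q \<in> {0<..<1}"
  shows "0 \<le> f q"
proof -
  have "measure (bf_space q) (accepting \<tau> \<gamma>) = f q"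
    using assms by (simp add: bernoulli_factory_def accepting_def)
  moreover have "0 \<le> measure (bf_space q) (accepting \<tau> \<gamma>)"
    by (rule measure_nonneg)
  ultimately show ?thesis
    by simp
qed

text \<open>Since the all-tails run has a law that does not depend on the coin parameter,
  the probability of accepting along it is at most a multiple of \<open>f q\<close> for every \<open>q\<close>,
  hence zero when \<open>f\<close> vanishes at \<open>0\<close>.\<close>
lemma emeasure_accepts_at_all_tails:
  assumes factory: "bernoulli_factory f \<tau> \<gamma>" and f0: "(f \<longlongrightarrow> 0) (at_right 0)"
    and p: "0 \<le> p" "p \<le> 1"
  shows "emeasure (bf_space p) {\<omega> \<in> accepts_at \<tau> \<gamma> (Suc n). \<forall>j<Suc n. \<not> fst (\<omega> j)} = 0"
proof -
  define A where "A = accepts_at \<tau> \<gamma> (Suc n)"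
  define a where "a = emeasure (\<Pi>\<^sub>M j\<in>UNIV. tails_draw) A"
  note \<tau>\<gamma> = bernoulli_factoryD[OF factory]
  have A: "A \<in> sets seq_space" "depends_on_prefix (Suc n) (\<lambda>\<omega>. \<omega> \<in> A)"
    unfolding A_def using accepts_at_sets[OF \<tau>\<gamma>(1,3)] depends_on_prefix_accepts_at[OF \<tau>\<gamma>(2,4)]
    by simp_all
  have tails: "emeasure (bf_space q) {\<omega> \<in> A. \<forall>j<Suc n. \<not> fst (\<omega> j)} = ennreal ((1 - q) ^ Suc n) * a"
    if "0 \<le> q" "q \<le> 1" for q
    unfolding a_def using that A by (rule emeasure_bf_space_tails_prefix)
  have "prob_space (\<Pi>\<^sub>M j\<in>UNIV. tails_draw)"
    unfolding tails_draw_def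
    by (intro prob_space_PiM prob_space.prob_space_distr prob_space_uniform_measure) auto
  then have "a \<le> 1"
    unfolding a_def by (rule prob_space.emeasure_le_1)
  then have a_real: "a = ennreal (enn2real a)"
    using neq_top_trans[OF ennreal_one_neq_top] by (simp add: ennreal_enn2real_if)
  have bound: "(1 - q) ^ Suc n * enn2real a \<le> f q" if q: "q \<in> {0<..<1}" for q
  proof -
    have "ennreal ((1 - q) ^ Suc n * enn2real a) = emeasure (bf_space q) {\<omega> \<in> A. \<forall>j<Suc n. \<not> fst (\<omega> j)}"
      using q tails[of q] a_real by (simp add: ennreal_mult)
    also have "\<dots> \<le> emeasure (bf_space q) (accepting \<tau> \<gamma>)"
    proof (rule emeasure_mono)
      show "{\<omega> \<in> A. \<forall>j<Suc n. \<not> fst (\<omega> j)} \<subseteq> accepting \<tau> \<gamma>"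
        using accepting_eq_UN_accepts_at[of \<tau> \<gamma>] by (auto simp: A_def)
      show "accepting \<tau> \<gamma> \<in> sets (bf_space q)"
        unfolding sets_bf_space using \<tau>\<gamma>(1,3) by (rule accepting_sets)
    qed
    also have "\<dots> = ennreal (f q)"
      using factory q by (rule emeasure_accepting)
    finally show ?thesis
      using bernoulli_factory_nonneg[OF factory q] by simp
  qed
  have "enn2real a \<le> 0"
  proof (intro tendsto_le[OF trivial_limit_at_right_real f0])
    have "((\<lambda>q. (1 - q) ^ Suc n * enn2real a) \<longlongrightarrow> (1 - 0) ^ Suc n * enn2real a) (at_right 0)"
      by (intro tendsto_intros)
    then show "((\<lambda>q. (1 - q) ^ Suc n * enn2real a) \<longlongrightarrow> enn2real a) (at_right 0)"
      by simp
    show "\<forall>\<^sub>F q in at_right 0. (1 - q) ^ Suc n * enn2real a \<le> f q"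
      using eventually_at_right_real[OF zero_less_one]
    proof (rule eventually_mono)
      show "(1 - q) ^ Suc n * enn2real a \<le> f q" if "q \<in> {0<..<1}" for q
        using that by (rule bound)
    qed
  qed
  then have "a = 0"
    using a_real enn2real_nonneg[of a] by (metis antisym ennreal_0)
  then show ?thesis
    using tails[OF p] by (simp add: A_def)
qed

lemma emeasure_accepting_le:
  assumes \<tau>: "\<And>n. 1 \<le> n \<Longrightarrow> \<tau> n \<in> seq_space \<rightarrow>\<^sub>M count_space UNIV"
    and \<gamma>: "\<And>n. 1 \<le> n \<Longrightarrow> \<gamma> n \<in> seq_space \<rightarrow>\<^sub>M count_space UNIV"
  shows "emeasure (bf_space p) (accepting \<tau> \<gamma>) \<le>
    (\<Sum>n. emeasure (bf_space p) {\<omega> \<in> accepts_at \<tau> \<gamma> (Suc n). \<forall>j<Suc n. \<not> fst (\<omega> j)}) +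
    (\<Sum>i. emeasure (bf_space p) {\<omega> \<in> running \<tau> i. fst (\<omega> i)})"
proof -
  define T where "T n = {\<omega> \<in> accepts_at \<tau> \<gamma> (Suc n). \<forall>j<Suc n. \<not> fst (\<omega> j)}" for n
  define H where "H i = {\<omega> \<in> running \<tau> i. fst (\<omega> i)}" for i
  have "T n = accepts_at \<tau> \<gamma> (Suc n) \<inter> {\<omega>. \<forall>j<Suc n. \<not> fst (\<omega> j)}" for n
    by (auto simp: T_def)
  then have T: "T n \<in> sets (bf_space p)" for n
    unfolding sets_bf_space using accepts_at_sets[OF \<tau> \<gamma>, where n="Suc n"] sets_seq_space_coins(1)
    by (simp add: sets.Int)
  have "H i = running \<tau> i \<inter> {\<omega>. fst (\<omega> i)}" for i
    by (auto simp: H_def)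
  then have H: "H i \<in> sets (bf_space p)" for i
    unfolding sets_bf_space using running_sets[OF \<tau>] sets_seq_space_coins(2)
    by (simp add: sets.Int)
  have "emeasure (bf_space p) (accepting \<tau> \<gamma>) \<le> emeasure (bf_space p) ((\<Union>n. T n) \<union> (\<Union>i. H i))"
  proof (rule emeasure_mono)
    show "accepting \<tau> \<gamma> \<subseteq> (\<Union>n. T n) \<union> (\<Union>i. H i)"
      using accepting_subset[of \<tau> \<gamma>] by (simp add: T_def H_def)
  qed (use T H in blast)
  also have "\<dots> \<le> emeasure (bf_space p) (\<Union>n. T n) + emeasure (bf_space p) (\<Union>i. H i)"
    using T H by (intro emeasure_subadditive) blast+
  also have "emeasure (bf_space p) (\<Union>n. T n) \<le> (\<Sum>n. emeasure (bf_space p) (T n))"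
    using T by (intro emeasure_subadditive_countably) blast
  also have "emeasure (bf_space p) (\<Union>i. H i) \<le> (\<Sum>i. emeasure (bf_space p) (H i))"
    using H by (intro emeasure_subadditive_countably) blast
  finally show ?thesis
    by (simp add: T_def H_def add_mono)
qed

lemma bernoulli_factory_expected_time_lower_bound:
  assumes factory: "bernoulli_factory f \<tau> \<gamma>" and f0: "(f \<longlongrightarrow> 0) (at_right 0)"
    and p: "p \<in> {0<..<1}"
  shows "ennreal (f p / p) \<le> expected_time p \<tau>"
proof -
  note \<tau>\<gamma> = bernoulli_factoryD[OF factory]
  have "ennreal (f p) = emeasure (bf_space p) (accepting \<tau> \<gamma>)"
    using factory p by (rule emeasure_accepting[symmetric])
  also have "\<dots> \<le>
      (\<Sum>n. emeasure (bf_space p) {\<omega> \<in> accepts_at \<tau> \<gamma> (Suc n). \<forall>j<Suc n. \<not> fst (\<omega> j)}) +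
      (\<Sum>i. emeasure (bf_space p) {\<omega> \<in> running \<tau> i. fst (\<omega> i)})"
    using \<tau>\<gamma>(1,3) by (rule emeasure_accepting_le)
  also have "\<dots> = ennreal p * (\<Sum>i. emeasure (bf_space p) (running \<tau> i))"
    using p emeasure_accepts_at_all_tails[OF factory f0]
      emeasure_bf_space_heads_indep[OF _ _ running_sets[OF \<tau>\<gamma>(1)] depends_on_prefix_running[OF \<tau>\<gamma>(2)]]
    by (simp add: ennreal_suminf_cmult)
  also have "\<dots> = ennreal p * expected_time p \<tau>"
    using expected_time_eq_suminf_running[OF \<tau>\<gamma>(5)[OF p] running_sets[OF \<tau>\<gamma>(1)]] by simp
  finally have "ennreal (f p) \<le> ennreal p * expected_time p \<tau>" .
  moreover have "0 \<le> f p"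
    using factory p by (rule bernoulli_factory_nonneg)
  ultimately show ?thesis
    using p by (simp add: divide_ennreal[symmetric] divide_le_posI_ennreal)
qed

(* The bound holds with C = 1 for every Bernoulli factory for f, fast or not. *)
theorem corollary1:
  fixes f :: "real \<Rightarrow> real" and c :: "nat \<Rightarrow> real"
  assumes range_f: "\<forall>p\<in>{0<..<1}. f p \<in> {0<..<1}"
    and c_nonneg: "\<forall>k. c k \<ge> 0"
    and c_sum: "(\<lambda>k. c (Suc k)) sums 1"
    and f_form: "\<forall>p\<in>{0<..<1}. f p = 1 - (\<Sum>k. c (Suc k) * (1 - p) ^ Suc k)"
    and f_lim: "filterlim (\<lambda>p. f p / p) at_top (at_right 0)"
    and f_deriv: "\<exists>C>0. \<exists>\<delta>>0. \<forall>p. 0 < p \<and> p < \<delta> \<longrightarrow> deriv f p \<ge> C * (f p / p)"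
  shows "\<forall>\<tau> \<gamma>. fast_factory f \<tau> \<gamma> \<longrightarrow>
           (\<exists>C>0. \<exists>\<delta>>0. \<forall>p\<in>{0<..<1}. p < \<delta> \<longrightarrow>
              expected_time p \<tau> \<ge> ennreal (C * f p / p))"
proof (intro allI impI)
  fix \<tau> \<gamma> assume "fast_factory f \<tau> \<gamma>"
  then have factory: "bernoulli_factory f \<tau> \<gamma>"
    by (simp add: fast_factory_def)
  have "(f \<longlongrightarrow> 0) (at_right 0)"
    using c_nonneg c_sum f_form by (rule tendsto_one_minus_power_series_at_right_0)
  then have "ennreal (1 * f p / p) \<le> expected_time p \<tau>" if "p \<in> {0<..<1}" for p
    using bernoulli_factory_expected_time_lower_bound[OF factory _ that] by simp
  then show "\<exists>C>0. \<exists>\<delta>>0. \<forall>p\<in>{0<..<1}. p < \<delta> \<longrightarrow> expected_time p \<tau> \<ge> ennreal (C * f p / p)"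
    by (intro exI[of _ "1::real"] conjI ballI impI) simp_all
qed

end
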